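(* Let $n\geq 2$ be even. (i) $\mu^+(A_n)\leq\mu^+(G)$ for every threshold graph $G$ on $n$ vertices. (ii) $\mu^-(G)\leq\mu^-(A_n)$ for every threshold graph $G$ on $n$ vertices with binary string $b=0^{s_1}1^{t_1}\cdots0^{s_k}1^{t_k}$ with $s_1=1$. (iii) $\mu^-(G)\leq\mu^-(A_n)$ for every threshold graph $G$ on $n$ vertices with binary string $b=0^{s_1}1^{t_1}\cdots0^{s_k}1^{t_k}$ with $s_1\geq 2$ and $2k+2<n$.
   Context: Eigenvalues of a graph are those of its $(0,1)$-adjacency matrix. For a graph $H$, $\mu^-(H)$ is the largest eigenvalue of $H$ less than $-1$ and $\mu^+(H)$ is the smallest positive eigenvalue of $H$. Threshold graphs from binary strings: given $b=b_1\cdots b_n\in\{0,1\}^n$ with $b_1=0$, start with a single vertex and for $j=2,\ldots,n$ add a new vertex adjacent to all previous vertices if $b_j=1$ and isolated if $b_j=0$; the result is $G(b)$, and $b$ is its binary string. $0^s$ (resp. $1^t$) denotes $s\geq1$ consecutive zeros (resp. $t\geq1$ ones). The anti-regular graph $A_m$ is $G(b)$ with $b=0101\cdots01$ (length $m$) for $m$ even and $b=00101\cdots01$ (length $m$) for $m$ odd. *)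

theory Defs
  imports Complex_Main "Jordan_Normal_Form.Char_Poly"
begin

text \<open>Binary strings are bool lists (True = 1, False = 0); vertex j (0-based) is the
  vertex added at step j+1.  Vertices i < j are adjacent iff b_j = 1.\<close>

definition threshold_adj :: "bool list \<Rightarrow> nat \<Rightarrow> nat \<Rightarrow> bool" where
  "threshold_adj b i j = (i \<noteq> j \<and> b ! (max i j))"

definition threshold_adj_mat :: "bool list \<Rightarrow> real mat" where
  "threshold_adj_mat b = mat (length b) (length b)
     (\<lambda>(i, j). if threshold_adj b i j then 1 else 0)"

definition is_threshold_string :: "bool list \<Rightarrow> bool" where
  "is_threshold_string b = (b \<noteq> [] \<and> b ! 0 = False)"

definition graph_eigenvalue :: "bool list \<Rightarrow> real \<Rightarrow> bool" where
  "graph_eigenvalue b x = eigenvalue (threshold_adj_mat b) x"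

definition mu_plus :: "bool list \<Rightarrow> real" where
  "mu_plus b = Min {x. graph_eigenvalue b x \<and> x > 0}"

definition mu_minus :: "bool list \<Rightarrow> real" where
  "mu_minus b = Max {x. graph_eigenvalue b x \<and> x < -1}"

definition antiregular_string :: "nat \<Rightarrow> bool list" where
  "antiregular_string m =
     (if even m then concat (replicate (m div 2) [False, True])
      else False # concat (replicate (m div 2) [False, True]))"

text \<open>b = 0^{s_1} 1^{t_1} ... 0^{s_k} 1^{t_k} with all s_i, t_i \<ge> 1 and k \<ge> 1
  (blocks indexed 0..k-1 here).\<close>
definition block_string :: "nat \<Rightarrow> (nat \<Rightarrow> nat) \<Rightarrow> (nat \<Rightarrow> nat) \<Rightarrow> bool list" where
  "block_string k s t = concat (map (\<lambda>i. replicate (s i) False @ replicate (t i) True) [0..<k])"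

definition block_form :: "bool list \<Rightarrow> nat \<Rightarrow> (nat \<Rightarrow> nat) \<Rightarrow> (nat \<Rightarrow> nat) \<Rightarrow> bool" where
  "block_form b k s t = (k \<ge> 1 \<and> (\<forall>i<k. s i \<ge> 1 \<and> t i \<ge> 1) \<and> b = block_string k s t)"

end

theory Submission
  imports Defs
begin

text \<open>
  Eliminating vertices one at a time (the last one is adjacent to all or to none of the others)
  turns the eigenvalue equation of \<open>G(b) + c J\<close> into that of a smaller threshold graph with a
  new shift \<open>c' = c - (b\<^sub>j + c)\<^sup>2 / (c - x)\<close>. So \<open>x\<close> is an eigenvalue of \<open>G(b)\<close> iff the run of these
  Moebius steps along the reversed string, started at \<open>c = 0\<close>, ends at \<open>x\<close>; eigenvalues
  \<open>y < -1\<close> are treated in the same way through the complement, started at \<open>c = -1\<close>, with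
  \<open>x = -1 - y\<close>. The steps are monotone on either side of the pole \<open>x\<close>, so the run of any string
  with at most \<open>J\<close> rises \<open>01\<close> is dominated by the run of the alternating string \<open>1010\<dots>\<close> of
  \<open>2J\<close> steps, and cannot reach \<open>x\<close> as long as the denominators of the latter run, which are
  polynomials in \<open>x\<close>, stay positive. These denominators are positive for small \<open>x\<close>, and a sign
  analysis shows that the first one to vanish as \<open>x\<close> grows makes the run of \<open>A\<^sub>n\<close> itself
  end at \<open>x\<close>. Hence an eigenvalue of \<open>G(b)\<close> in the relevant range forces an eigenvalue of
  \<open>A\<^sub>n\<close> between it and \<open>0\<close> (resp. \<open>-1\<close>). The block conditions of (ii) and (iii) are exactly what
  bounds the number of rises of the complement.
\<close>

section \<open>The continued-fraction step\<close>

definition cf_step :: "real \<Rightarrow> bool \<Rightarrow> real \<Rightarrow> real" where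
  "cf_step x \<beta> c = c - (of_bool \<beta> + c)\<^sup>2 / (c - x)"

fun cf_avoids_pole :: "real \<Rightarrow> real \<Rightarrow> bool list \<Rightarrow> bool" where
  "cf_avoids_pole x c [] = True"
| "cf_avoids_pole x c (\<beta> # L) = (c \<noteq> x \<and> cf_avoids_pole x (cf_step x \<beta> c) L)"

lemma cf_avoids_pole_snoc:
  "cf_avoids_pole x c (L @ [\<beta>]) \<longleftrightarrow> cf_avoids_pole x c L \<and> fold (cf_step x) L c \<noteq> x"
  by (induction L arbitrary: c) auto

lemma cf_step_eq: "c \<noteq> x \<Longrightarrow> cf_step x \<beta> c = ((x + 2 * of_bool \<beta>) * c + of_bool \<beta>) / (x - c)"
  by (cases \<beta>) (simp_all add: cf_step_def field_simps power2_eq_square)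

lemma cf_step_diff:
  assumes "a \<noteq> x" "c \<noteq> x"
  shows "cf_step x \<beta> c - cf_step x \<beta> a = (x + of_bool \<beta>)\<^sup>2 * (c - a) / ((x - c) * (x - a))"
  using assms by (cases \<beta>) (simp_all add: cf_step_eq field_simps power2_eq_square)

lemma cf_step_mono:
  assumes "a \<le> c" and "c < x \<or> x < a"
  shows "cf_step x \<beta> a \<le> cf_step x \<beta> c"
proof -
  have "(x - c) * (x - a) > 0"
    using assms by (auto intro: mult_pos_pos mult_neg_neg)
  then have "(x + of_bool \<beta>)\<^sup>2 * (c - a) / ((x - c) * (x - a)) \<ge> 0"
    using assms(1) by simp
  moreover have "a \<noteq> x" "c \<noteq> x"
    using assms by auto
  ultimately show ?thesis
    using cf_step_diff[of a x c \<beta>] by linarith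
qed

lemma cf_step_True_plus_one: "c \<noteq> x \<Longrightarrow> cf_step x True c + 1 = (x + 1) * (c + 1) / (x - c)"
  by (simp add: cf_step_eq field_simps)

lemma cf_step_False_plus: "c \<noteq> x \<Longrightarrow> cf_step x False c + x = x\<^sup>2 / (x - c)"
  by (simp add: cf_step_eq field_simps power2_eq_square)

lemma cf_step_True_minus_one: "x \<noteq> -1 \<Longrightarrow> cf_step x True (-1) = -1"
  by (simp add: cf_step_def)

lemma cf_step_False_minus_one: "x \<noteq> -1 \<Longrightarrow> cf_step x False (-1) = - x / (1 + x)"
  by (simp add: cf_step_def field_simps)

lemma cf_step_True_le_minus_one:
  assumes "x > 0" and "c \<le> -1 \<or> x < c"
  shows "cf_step x True c \<le> -1"
proof -
  have "(x + 1) * (c + 1) / (x - c) \<le> 0"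
    using assms(2)
  proof
    assume "c \<le> -1"
    then show ?thesis
      using assms(1) by (intro divide_nonpos_pos mult_nonneg_nonpos) auto
  next
    assume "x < c"
    then show ?thesis
      using assms(1) by (intro divide_nonneg_neg mult_nonneg_nonneg) auto
  qed
  then show ?thesis
    using cf_step_True_plus_one[of c x] assms by auto
qed

lemma cf_step_False_nonpos:
  assumes "x > 0" and "c \<le> 0"
  shows "c \<le> cf_step x False c" and "cf_step x False c \<le> 0"
proof -
  have "c\<^sup>2 / (c - x) \<le> 0"
    using assms by (intro divide_nonneg_neg) auto
  moreover have "x * c / (x - c) \<le> 0"
    using assms by (intro divide_nonpos_pos mult_nonneg_nonpos) auto
  ultimately show "c \<le> cf_step x False c" and "cf_step x False c \<le> 0"
    using cf_step_eq[of c x False] assms by (auto simp: cf_step_def)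
qed

lemma cf_step_False_gt_minus:
  assumes "x > 0" and "c < x"
  shows "- x < cf_step x False c"
proof -
  have "x\<^sup>2 / (x - c) > 0"
    using assms by simp
  then show ?thesis
    using cf_step_False_plus[of c x] assms by linarith
qed

lemma cf_step_False_lt_minus:
  assumes "x > 0" and "x < c"
  shows "cf_step x False c < - x"
proof -
  have "x\<^sup>2 / (x - c) < 0"
    using assms by (simp add: divide_pos_neg)
  then show ?thesis
    using cf_step_False_plus[of c x] assms by simp
qed

section \<open>Eliminating vertices\<close>

definition adj_entry :: "bool list \<Rightarrow> nat \<Rightarrow> nat \<Rightarrow> real" where
  "adj_entry b i j = of_bool (threshold_adj b i j)"

definition shifted_eigen_eq :: "bool list \<Rightarrow> real \<Rightarrow> real \<Rightarrow> (nat \<Rightarrow> real) \<Rightarrow> bool" where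
  "shifted_eigen_eq b c x f \<longleftrightarrow>
     (\<forall>i<length b. (\<Sum>j<length b. (adj_entry b i j + c) * f j) = x * f i)"

definition shifted_eigenvalue :: "bool list \<Rightarrow> real \<Rightarrow> real \<Rightarrow> bool" where
  "shifted_eigenvalue b c x \<longleftrightarrow> (\<exists>f. (\<exists>i<length b. f i \<noteq> 0) \<and> shifted_eigen_eq b c x f)"

lemma shifted_eigen_eq_cong:
  "(\<And>j. j < length b \<Longrightarrow> f j = g j) \<Longrightarrow> shifted_eigen_eq b c x f \<longleftrightarrow> shifted_eigen_eq b c x g"
  unfolding shifted_eigen_eq_def by (metis (no_types, lifting) lessThan_iff sum.cong)

lemma adj_entry_snoc:
  "i < length b \<Longrightarrow> j < length b \<Longrightarrow> adj_entry (b @ [\<beta>]) i j = adj_entry b i j"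
  "i < length b \<Longrightarrow> adj_entry (b @ [\<beta>]) i (length b) = of_bool \<beta>"
  "j < length b \<Longrightarrow> adj_entry (b @ [\<beta>]) (length b) j = of_bool \<beta>"
  "adj_entry (b @ [\<beta>]) (length b) (length b) = 0"
  by (auto simp: adj_entry_def threshold_adj_def nth_append max_def)

lemma shifted_eigen_eq_snoc:
  assumes "c \<noteq> x"
  shows "shifted_eigen_eq (b @ [\<beta>]) c x f \<longleftrightarrow>
    f (length b) = (of_bool \<beta> + c) * (\<Sum>j<length b. f j) / (x - c)
    \<and> shifted_eigen_eq b (cf_step x \<beta> c) x f"
proof -
  define m B S where "m = length b" and "B = (of_bool \<beta> :: real)" and "S = (\<Sum>j<m. f j)"
  have row: "(\<Sum>j<Suc m. (adj_entry (b @ [\<beta>]) i j + c) * f j)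
      = (\<Sum>j<m. (adj_entry b i j + c) * f j) + (B + c) * f m" if "i < m" for i
    using that by (simp add: adj_entry_snoc m_def B_def)
  have last_row: "(\<Sum>j<Suc m. (adj_entry (b @ [\<beta>]) m j + c) * f j) = (B + c) * S + c * f m"
    by (simp add: adj_entry_snoc m_def B_def S_def sum_distrib_left)
  have shift: "(\<Sum>j<m. (adj_entry b i j + cf_step x \<beta> c) * f j)
      = (\<Sum>j<m. (adj_entry b i j + c) * f j) + (cf_step x \<beta> c - c) * S" for i
    by (simp add: S_def algebra_simps sum.distrib sum_distrib_left sum_distrib_right)
  have last_iff: "(B + c) * S + c * f m = x * f m \<longleftrightarrow> f m = (B + c) * S / (x - c)"
    using assms by (auto simp: field_simps)
  have "(cf_step x \<beta> c - c) * S = (B + c) * ((B + c) * S / (x - c))"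
    using assms by (simp add: cf_step_def B_def field_simps power2_eq_square)
  then have row_iff: "(\<Sum>j<m. (adj_entry b i j + c) * f j) + (B + c) * f m = x * f i
      \<longleftrightarrow> (\<Sum>j<m. (adj_entry b i j + cf_step x \<beta> c) * f j) = x * f i"
    if "f m = (B + c) * S / (x - c)" for i
    using that by (simp add: shift)
  have split: "(\<forall>i<Suc m. P i) \<longleftrightarrow> (\<forall>i<m. P i) \<and> P m" for P
    using less_Suc_eq by auto
  show ?thesis
    unfolding shifted_eigen_eq_def length_append_singleton m_def[symmetric] split
    using row last_row last_iff row_iff by (auto simp: B_def S_def)
qed

lemma shifted_eigenvalue_snoc:
  assumes "c \<noteq> x"
  shows "shifted_eigenvalue (b @ [\<beta>]) c x \<longleftrightarrow> shifted_eigenvalue b (cf_step x \<beta> c) x"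
proof
  assume "shifted_eigenvalue (b @ [\<beta>]) c x"
  then obtain f where nonzero: "\<exists>i<Suc (length b). f i \<noteq> 0"
    and eq: "shifted_eigen_eq (b @ [\<beta>]) c x f"
    unfolding shifted_eigenvalue_def by auto
  have last: "f (length b) = (of_bool \<beta> + c) * (\<Sum>j<length b. f j) / (x - c)"
    and reduced: "shifted_eigen_eq b (cf_step x \<beta> c) x f"
    using eq shifted_eigen_eq_snoc[OF assms] by auto
  have "\<exists>i<length b. f i \<noteq> 0"
  proof (rule ccontr)
    assume "\<not> ?thesis"
    then have "f (length b) = 0"
      using last by simp
    with \<open>\<not> ?thesis\<close> nonzero show False
      using less_Suc_eq by auto
  qed
  with reduced show "shifted_eigenvalue b (cf_step x \<beta> c) x"
    unfolding shifted_eigenvalue_def by blast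
next
  assume "shifted_eigenvalue b (cf_step x \<beta> c) x"
  then obtain g where nonzero: "\<exists>i<length b. g i \<noteq> 0"
    and eq: "shifted_eigen_eq b (cf_step x \<beta> c) x g"
    unfolding shifted_eigenvalue_def by auto
  define f where "f = g(length b := (of_bool \<beta> + c) * (\<Sum>j<length b. g j) / (x - c))"
  have "shifted_eigen_eq b (cf_step x \<beta> c) x f"
    using eq by (subst shifted_eigen_eq_cong[of b f g]) (auto simp: f_def)
  then have "shifted_eigen_eq (b @ [\<beta>]) c x f"
    using shifted_eigen_eq_snoc[OF assms] by (simp add: f_def)
  moreover have "\<exists>i<length (b @ [\<beta>]). f i \<noteq> 0"
    using nonzero by (metis f_def fun_upd_other length_append_singleton less_Suc_eq less_irrefl)
  ultimately show "shifted_eigenvalue (b @ [\<beta>]) c x"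
    unfolding shifted_eigenvalue_def by blast
qed

lemma shifted_eigenvalue_single: "shifted_eigenvalue [\<beta>] c x \<longleftrightarrow> c = x"
  by (auto simp: shifted_eigenvalue_def shifted_eigen_eq_def adj_entry_def threshold_adj_def
      intro: exI[of _ "\<lambda>_. 1"])

lemma shifted_eigenvalue_iff_cf_fold:
  assumes "b \<noteq> []" and "cf_avoids_pole x c (rev (tl b))"
  shows "shifted_eigenvalue b c x \<longleftrightarrow> fold (cf_step x) (rev (tl b)) c = x"
  using assms
proof (induction b arbitrary: c rule: rev_induct)
  case Nil
  then show ?case by simp
next
  case (snoc \<beta> b)
  show ?case
  proof (cases "b = []")
    case True
    then show ?thesis
      using shifted_eigenvalue_single by simp
  next
    case False
    then have tl: "rev (tl (b @ [\<beta>])) = \<beta> # rev (tl b)"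
      by (cases b) auto
    then have "c \<noteq> x" and "cf_avoids_pole x (cf_step x \<beta> c) (rev (tl b))"
      using snoc.prems(2) by auto
    then show ?thesis
      using shifted_eigenvalue_snoc snoc.IH[OF False] tl by simp
  qed
qed

lemma adj_entry_map_Not:
  "i < length b \<Longrightarrow> j < length b \<Longrightarrow>
    adj_entry (map Not b) i j = (if i = j then 0 else 1 - adj_entry b i j)"
  by (auto simp: adj_entry_def threshold_adj_def max_def)

lemma shifted_eigen_eq_complement:
  "shifted_eigen_eq b 0 y f \<longleftrightarrow> shifted_eigen_eq (map Not b) (-1) (-1 - y) f"
proof -
  have row: "(\<Sum>j<length b. (adj_entry (map Not b) i j + -1) * f j)
      = - (\<Sum>j<length b. (adj_entry b i j + 0) * f j) - f i" if "i < length b" for i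
  proof -
    have "(\<Sum>j<length b. (adj_entry (map Not b) i j + -1) * f j)
        = (\<Sum>j<length b. - (adj_entry b i j * f j) - (if i = j then f j else 0))"
      using that by (intro sum.cong) (auto simp: adj_entry_map_Not adj_entry_def threshold_adj_def)
    also have "\<dots> = - (\<Sum>j<length b. adj_entry b i j * f j) - f i"
      using that by (simp add: sum_subtractf sum_negf)
    finally show ?thesis
      by simp
  qed
  show ?thesis
    unfolding shifted_eigen_eq_def length_map
  proof (intro iffI allI impI)
    fix i
    assume eq: "\<forall>i<length b. (\<Sum>j<length b. (adj_entry b i j + 0) * f j) = y * f i"
      and i: "i < length b"
    show "(\<Sum>j<length b. (adj_entry (map Not b) i j + -1) * f j) = (-1 - y) * f i"
      using eq[rule_format, OF i] row[OF i] by (simp add: algebra_simps)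
  next
    fix i
    assume eq: "\<forall>i<length b. (\<Sum>j<length b. (adj_entry (map Not b) i j + -1) * f j) = (-1 - y) * f i"
      and i: "i < length b"
    show "(\<Sum>j<length b. (adj_entry b i j + 0) * f j) = y * f i"
      using eq[rule_format, OF i] row[OF i] by (simp add: algebra_simps)
  qed
qed

lemma shifted_eigenvalue_complement:
  "shifted_eigenvalue b 0 y \<longleftrightarrow> shifted_eigenvalue (map Not b) (-1) (-1 - y)"
  unfolding shifted_eigenvalue_def using shifted_eigen_eq_complement by simp

lemma threshold_adj_mat_carrier: "threshold_adj_mat b \<in> carrier_mat (length b) (length b)"
  unfolding threshold_adj_mat_def by simp

lemma graph_eigenvalue_iff_shifted: "graph_eigenvalue b y \<longleftrightarrow> shifted_eigenvalue b 0 y"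
proof -
  let ?A = "threshold_adj_mat b" and ?n = "length b"
  have mult_vec: "(?A *\<^sub>v vec ?n f) $ i = (\<Sum>j<?n. (adj_entry b i j + 0) * f j)"
    if "i < ?n" for i f
    using that unfolding threshold_adj_mat_def adj_entry_def of_bool_def
    by (auto simp: scalar_prod_def lessThan_atLeast0 intro!: sum.cong)
  have eigen_eq: "?A *\<^sub>v vec ?n f = y \<cdot>\<^sub>v vec ?n f \<longleftrightarrow> shifted_eigen_eq b 0 y f" for f
    unfolding shifted_eigen_eq_def vec_eq_iff
    using threshold_adj_mat_carrier[of b] by (auto simp: mult_vec simp del: index_mult_mat_vec)
  have "graph_eigenvalue b y \<longleftrightarrow> (\<exists>v \<in> carrier_vec ?n. v \<noteq> 0\<^sub>v ?n \<and> ?A *\<^sub>v v = y \<cdot>\<^sub>v v)"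
    unfolding graph_eigenvalue_def eigenvalue_def eigenvector_def threshold_adj_mat_def by auto
  also have "\<dots> \<longleftrightarrow> (\<exists>f. vec ?n f \<noteq> 0\<^sub>v ?n \<and> ?A *\<^sub>v vec ?n f = y \<cdot>\<^sub>v vec ?n f)"
  proof
    assume "\<exists>v \<in> carrier_vec ?n. v \<noteq> 0\<^sub>v ?n \<and> ?A *\<^sub>v v = y \<cdot>\<^sub>v v"
    then obtain v where "v \<in> carrier_vec ?n" "v \<noteq> 0\<^sub>v ?n" "?A *\<^sub>v v = y \<cdot>\<^sub>v v"
      by blast
    moreover from \<open>v \<in> carrier_vec ?n\<close> have "vec ?n (($) v) = v"
      by auto
    ultimately show "\<exists>f. vec ?n f \<noteq> 0\<^sub>v ?n \<and> ?A *\<^sub>v vec ?n f = y \<cdot>\<^sub>v vec ?n f"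
      by metis
  qed auto
  also have "\<dots> \<longleftrightarrow> shifted_eigenvalue b 0 y"
    unfolding shifted_eigenvalue_def eigen_eq by (auto simp: vec_eq_iff)
  finally show ?thesis .
qed

lemma finite_graph_eigenvalues: "finite {x. graph_eigenvalue b x}"
proof -
  let ?A = "threshold_adj_mat b"
  have "degree (char_poly ?A) = length b \<and> coeff (char_poly ?A) (length b) = 1"
    by (rule degree_monic_char_poly[OF threshold_adj_mat_carrier])
  then have "char_poly ?A \<noteq> 0"
    by auto
  then have "finite {x. poly (char_poly ?A) x = 0}"
    by (rule poly_roots_finite)
  moreover have "{x. graph_eigenvalue b x} = {x. poly (char_poly ?A) x = 0}"
    unfolding graph_eigenvalue_def
    using eigenvalue_root_char_poly[OF threshold_adj_mat_carrier] by auto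
  ultimately show ?thesis by simp
qed

fun rises :: "bool list \<Rightarrow> nat" where
  "rises (a # b # l) = of_bool (\<not> a \<and> b) + rises (b # l)"
| "rises _ = 0"

lemma rises_Cons: "rises (a # l) = of_bool (\<not> a \<and> l \<noteq> [] \<and> hd l) + rises l"
  by (cases l) auto

lemma rises_Cons_True [simp]: "rises (True # l) = rises l"
  by (simp add: rises_Cons)

lemma rises_append:
  "rises (xs @ ys) = rises xs + rises ys + of_bool (xs \<noteq> [] \<and> ys \<noteq> [] \<and> \<not> last xs \<and> hd ys)"
  by (induction xs) (auto simp: rises_Cons)

lemma rises_replicate [simp]: "rises (replicate m a) = 0"
  by (induction m) (auto simp: rises_Cons)

lemma rises_le_half_length: "rises l \<le> length l div 2"
proof -
  have "rises (a # l) \<le> (length l + of_bool (\<not> a)) div 2" for a l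
  proof (induction l arbitrary: a)
    case (Cons b l)
    then have "rises (b # l) \<le> (length l + of_bool (\<not> b)) div 2" .
    then show ?case
      by (cases a; cases b; simp; presburger)
  qed simp
  from this[of "hd l" "tl l"] show ?thesis
    by (cases l) (auto intro: order_trans div_le_mono)
qed

lemma rises_rev_map_Not: "rises (rev (map Not l)) = rises l"
  by (induction l) (auto simp: rises_append rises_Cons last_rev hd_map)

lemma rev_tl_map_upt: "rev (tl (map f [0..<n])) = map (\<lambda>i. f (n - 1 - i)) [0..<n - 1]"
proof (rule nth_equalityI)
  fix i
  assume "i < length (rev (tl (map f [0..<n])))"
  then have "Suc (n - 1 - Suc i) = n - 1 - i"
    by simp
  with \<open>i < length (rev (tl (map f [0..<n])))\<close>
  show "rev (tl (map f [0..<n])) ! i = map (\<lambda>i. f (n - 1 - i)) [0..<n - 1] ! i"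
    by (simp add: rev_nth nth_tl)
qed simp

lemma odd_diff_iff_even:
  fixes n i :: nat
  assumes "even n" "i < n"
  shows "odd (n - 1 - i) \<longleftrightarrow> even i"
proof -
  have "n = (n - 1 - i) + Suc i"
    using assms(2) by linarith
  then show ?thesis
    using assms(1) by (metis even_add even_Suc)
qed

lemma antiregular_string_even: "even n \<Longrightarrow> antiregular_string n = map odd [0..<n]"
proof -
  have "concat (replicate m [False, True]) = map odd [0..<2 * m]" for m
    by (induction m) (simp_all add: replicate_append_same[symmetric])
  then show "even n \<Longrightarrow> antiregular_string n = map odd [0..<n]"
    by (simp add: antiregular_string_def)
qed

lemma length_antiregular_string: "even n \<Longrightarrow> length (antiregular_string n) = n"
  by (simp add: antiregular_string_even)

lemma rev_tl_antiregular_string: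
  "even n \<Longrightarrow> rev (tl (antiregular_string n)) = map even [0..<n - 1]"
  by (auto simp: antiregular_string_even rev_tl_map_upt odd_diff_iff_even intro!: map_cong)

lemma rev_tl_complement_antiregular_string:
  assumes "even n" "n \<ge> 2"
  shows "rev (tl (map Not (antiregular_string n))) = False # map even [0..<n - 2]"
proof -
  have "map Not (antiregular_string n) = map even [0..<n]"
    using assms(1) by (simp add: antiregular_string_even)
  then have "rev (tl (map Not (antiregular_string n))) = map (\<lambda>i. even (n - 1 - i)) [0..<n - 1]"
    by (simp add: rev_tl_map_upt)
  also have "\<dots> = map odd [0..<n - 1]"
    using assms(1) by (auto simp: odd_diff_iff_even intro!: map_cong)
  also have "\<dots> = False # map even [0..<n - 2]"
    using assms(2) by (intro nth_equalityI) (auto simp: nth_Cons split: nat.split)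
  finally show ?thesis .
qed

lemma block_string_Suc:
  "block_string (Suc k) s t = block_string k s t @ replicate (s k) False @ replicate (t k) True"
  by (simp add: block_string_def)

lemma length_block_string: "length (block_string k s t) = (\<Sum>i<k. s i + t i)"
  by (induction k) (simp_all add: block_string_Suc block_string_def)

lemma block_string_first_block:
  "k \<ge> 1 \<Longrightarrow> \<exists>r. block_string k s t = replicate (s 0) False @ replicate (t 0) True @ r"
  by (simp add: block_string_def upt_conv_Cons)

lemma last_block_string: "t k \<ge> 1 \<Longrightarrow> last (block_string (Suc k) s t)"
  by (simp add: block_string_Suc)

lemma rises_block_string:
  "\<forall>i<k. s i \<ge> 1 \<and> t i \<ge> 1 \<Longrightarrow> rises (block_string k s t) = k"
proof (induction k)
  case 0
  then show ?case by (simp add: block_string_def)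
next
  case (Suc k)
  have "last (block_string k s t)" if "block_string k s t \<noteq> []"
    using that Suc.prems last_block_string[of t "k - 1" s]
    by (cases k) (auto simp: block_string_def)
  then show ?case
    using Suc by (auto simp: block_string_Suc rises_append)
qed

lemma length_block_string_ge:
  assumes "\<forall>i<k. s i \<ge> 1 \<and> t i \<ge> 1"
  shows "2 * k \<le> length (block_string k s t)"
proof -
  have "(\<Sum>i<k. 2) \<le> (\<Sum>i<k. s i + t i)"
  proof (intro sum_mono)
    fix i
    assume "i \<in> {..<k}"
    then have "s i \<ge> 1" "t i \<ge> 1"
      using assms by auto
    then show "2 \<le> s i + t i"
      by linarith
  qed
  then show ?thesis
    by (simp add: length_block_string)
qed

lemma block_string_ones:
  assumes "\<forall>i<k. s i \<ge> 1 \<and> t i \<ge> 1" and "length (block_string k s t) = 2 * k"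
  shows "block_string k s t = map odd [0..<2 * k]"
  using assms
proof (induction k)
  case 0
  then show ?case by (simp add: block_string_def)
next
  case (Suc k)
  have "2 * k \<le> length (block_string k s t)"
    using Suc.prems(1) length_block_string_ge[of k s t] by simp
  moreover have "s k \<ge> 1" "t k \<ge> 1"
    using Suc.prems(1) by auto
  ultimately have "length (block_string k s t) = 2 * k" "s k = 1" "t k = 1"
    using Suc.prems(2) by (simp_all add: block_string_Suc)
  then show ?case
    using Suc by (simp add: block_string_Suc)
qed

lemma block_form_rises_tl:
  assumes "block_form b k s t"
  shows "k = of_bool (s 0 = 1) + rises (tl b)"
proof -
  have k: "k \<ge> 1" and blocks: "\<forall>i<k. s i \<ge> 1 \<and> t i \<ge> 1" and b: "b = block_string k s t"
    using assms unfolding block_form_def by auto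
  obtain r where r: "b = replicate (s 0) False @ replicate (t 0) True @ r"
    using block_string_first_block[OF k] b by auto
  have "s 0 \<ge> 1" "t 0 \<ge> 1"
    using blocks k by auto
  then have "b = False # tl b" "tl b \<noteq> []" "hd (tl b) \<longleftrightarrow> s 0 = 1"
    using r by (cases "s 0"; cases "s 0 - 1"; auto)+
  then show ?thesis
    using rises_block_string[OF blocks] b rises_Cons[of False "tl b"] by simp
qed

lemma block_form_rises_tl_bound:
  assumes bf: "block_form b k s t" and n: "length b = n" "even n"
    and ne: "b \<noteq> antiregular_string n"
    and first: "s 0 = 1 \<or> (2 \<le> s 0 \<and> 2 * k + 2 < n)"
  shows "2 * rises (tl b) + 4 \<le> n"
proof (cases "s 0 = 1")
  case True
  have blocks: "\<forall>i<k. s i \<ge> 1 \<and> t i \<ge> 1" and b: "b = block_string k s t"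
    using bf unfolding block_form_def by auto
  have "n \<noteq> 2 * k"
  proof
    assume "n = 2 * k"
    then have "b = antiregular_string n"
      using block_string_ones[OF blocks] b n by (simp add: antiregular_string_even)
    with ne show False ..
  qed
  moreover have "2 * k \<le> n"
    using length_block_string_ge[OF blocks] b n(1) by simp
  ultimately have "2 * k + 2 \<le> n"
    using n(2) by presburger
  then show ?thesis
    using block_form_rises_tl[OF bf] True by simp
next
  case False
  then have "2 * k + 4 \<le> n"
    using first n(2) by presburger
  then show ?thesis
    using block_form_rises_tl[OF bf] False by simp
qed

section \<open>Domination by the alternating run\<close>

definition alternating_reference :: "real \<Rightarrow> (nat \<Rightarrow> real) \<Rightarrow> nat \<Rightarrow> bool" where
  "alternating_reference x r J \<longleftrightarrow>
     (\<forall>k<2 * J. r (Suc k) = cf_step x (even k) (r k)) \<and> (\<forall>i<J. x < r (2 * i + 1))"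

text \<open>The value \<open>c\<close> reached after reading a prefix that ends with the bit \<open>p\<close> and has \<open>j\<close> rises
  is bounded by the reference run \<open>r\<close> of the alternating string \<open>1010\<dots>\<close>; the only
  exceptional state is the initial one, \<open>c = -1\<close>, used for complements.\<close>

definition dominated :: "real \<Rightarrow> (nat \<Rightarrow> real) \<Rightarrow> nat \<Rightarrow> bool \<Rightarrow> real \<Rightarrow> bool" where
  "dominated x r j p c \<longleftrightarrow>
     (if \<not> p then r (2 * j) \<le> c \<and> c \<le> 0
      else if j = 0 then c = -1 \<and> r 0 \<le> cf_step x False (-1)
      else c \<le> -1 \<or> r (2 * j - 1) \<le> c)"

lemma alternating_reference_step:
  "alternating_reference x r J \<Longrightarrow> k < 2 * J \<Longrightarrow> r (Suc k) = cf_step x (even k) (r k)"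
  unfolding alternating_reference_def by blast

lemma alternating_reference_above:
  assumes "alternating_reference x r J" "0 < j" "j \<le> J"
  shows "x < r (2 * j - 1)"
proof -
  have "\<forall>i<J. x < r (2 * i + 1)"
    using assms(1) unfolding alternating_reference_def by blast
  then have "x < r (2 * (j - 1) + 1)"
    using assms(2,3) by simp
  moreover have "2 * (j - 1) + 1 = 2 * j - 1"
    using assms(2) by simp
  ultimately show ?thesis
    by simp
qed

lemma dominated_not_pole:
  assumes "x > 0" "alternating_reference x r J" "dominated x r j p c" "j \<le> J"
  shows "c \<noteq> x"
  using assms alternating_reference_above[OF assms(2) _ assms(4)]
  by (auto simp: dominated_def split: if_splits)

lemma dominated_step_True:
  assumes x: "x > 0" and ref: "alternating_reference x r J" and dom: "dominated x r j p c"
    and j: "(if p then j else Suc j) \<le> J"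
  shows "dominated x r (if p then j else Suc j) True (cf_step x True c)"
proof (cases p)
  case False
  then have "r (2 * j) \<le> c" "c \<le> 0" "j < J"
    using dom j by (auto simp: dominated_def)
  then have "cf_step x True (r (2 * j)) \<le> cf_step x True c"
    using x by (intro cf_step_mono) auto
  moreover have "r (2 * j + 1) = cf_step x True (r (2 * j))"
    using alternating_reference_step[OF ref, of "2 * j"] \<open>j < J\<close> by simp
  ultimately show ?thesis
    using False by (simp add: dominated_def)
next
  case True
  show ?thesis
  proof (cases "j = 0")
    case True
    then show ?thesis
      using \<open>p\<close> dom x cf_step_True_minus_one[of x] by (simp add: dominated_def)
  next
    case False
    then have "x < r (2 * j - 1)"
      using alternating_reference_above[OF ref] \<open>p\<close> j by simp
    then have "c \<le> -1 \<or> x < c"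
      using \<open>p\<close> dom False by (auto simp: dominated_def)
    then show ?thesis
      using \<open>p\<close> False cf_step_True_le_minus_one[OF x] by (simp add: dominated_def)
  qed
qed

lemma dominated_step_False:
  assumes x: "x > 0" and ref: "alternating_reference x r J" and dom: "dominated x r j p c"
    and j: "j \<le> J"
  shows "dominated x r j False (cf_step x False c)"
proof (cases "p \<and> j \<noteq> 0")
  case False
  then consider "\<not> p" | "p" "j = 0"
    by blast
  then show ?thesis
  proof cases
    case 1
    then show ?thesis
      using dom cf_step_False_nonpos[OF x, of c] by (auto simp: dominated_def)
  next
    case 2
    then have "c = -1" "r 0 \<le> cf_step x False (-1)"
      using dom by (simp_all add: dominated_def)
    then show ?thesis
      using cf_step_False_nonpos[OF x, of "-1"] 2 by (simp add: dominated_def)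
  qed
next
  case True
  define w where "w = r (2 * j - 1)"
  have w: "x < w" and z: "r (2 * j) = cf_step x False w"
    using alternating_reference_above[OF ref _ j] alternating_reference_step[OF ref, of "2 * j - 1"]
      True j unfolding w_def by auto
  have "c \<le> -1 \<or> w \<le> c"
    using dom True unfolding w_def by (simp add: dominated_def)
  then have "r (2 * j) \<le> cf_step x False c \<and> cf_step x False c \<le> 0"
  proof
    assume "c \<le> -1"
    then show ?thesis
      using z cf_step_False_lt_minus[OF x w] cf_step_False_gt_minus[OF x, of c]
        cf_step_False_nonpos[OF x, of c] x by auto
  next
    assume "w \<le> c"
    then show ?thesis
      using z w cf_step_mono[of w c x False] cf_step_False_lt_minus[OF x, of c] x by auto
  qed
  then show ?thesis
    by (simp add: dominated_def)
qed

lemma dominated_run_avoids_pole: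
  assumes x: "x > 0" and ref: "alternating_reference x r J"
  shows "dominated x r j p c \<Longrightarrow> j + rises (p # L) \<le> J \<Longrightarrow>
    cf_avoids_pole x c L \<and> fold (cf_step x) L c \<noteq> x"
proof (induction L arbitrary: j p c)
  case Nil
  then show ?case
    using dominated_not_pole[OF x ref] by simp
next
  case (Cons \<beta> L)
  let ?j = "if \<beta> \<and> \<not> p then Suc j else j"
  have "?j + rises (\<beta> # L) \<le> J"
    using Cons.prems(2) by auto
  moreover have "dominated x r ?j \<beta> (cf_step x \<beta> c)"
    using dominated_step_True[OF x ref Cons.prems(1)] dominated_step_False[OF x ref Cons.prems(1)]
      calculation by (cases \<beta>; cases p) auto
  ultimately show ?case
    using Cons.IH dominated_not_pole[OF x ref Cons.prems(1)] Cons.prems(2) by simp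
qed

section \<open>The alternating run in homogeneous coordinates\<close>

text \<open>Numerator and denominator of the run of the alternating string \<open>1010\<dots>\<close> started at
  \<open>p0 x / q0 x\<close>: \<open>cf_step x \<beta>\<close> in homogeneous coordinates, with the representative chosen
  so that all denominators are positive for small \<open>x > 0\<close>.\<close>

fun orbit :: "(real \<Rightarrow> real) \<Rightarrow> (real \<Rightarrow> real) \<Rightarrow> nat \<Rightarrow> real \<Rightarrow> real \<times> real" where
  "orbit p0 q0 0 x = (p0 x, q0 x)"
| "orbit p0 q0 (Suc k) x = (case orbit p0 q0 k x of (p, q) \<Rightarrow>
     if even k then ((x + 2) * p + q, x * q - p) else (- x * p, p - x * q))"

definition orbit_num :: "(real \<Rightarrow> real) \<Rightarrow> (real \<Rightarrow> real) \<Rightarrow> nat \<Rightarrow> real \<Rightarrow> real" where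
  "orbit_num p0 q0 k x = fst (orbit p0 q0 k x)"

definition orbit_den :: "(real \<Rightarrow> real) \<Rightarrow> (real \<Rightarrow> real) \<Rightarrow> nat \<Rightarrow> real \<Rightarrow> real" where
  "orbit_den p0 q0 k x = snd (orbit p0 q0 k x)"

lemma orbit_num_0 [simp]: "orbit_num p0 q0 0 x = p0 x"
  and orbit_den_0 [simp]: "orbit_den p0 q0 0 x = q0 x"
  by (simp_all add: orbit_num_def orbit_den_def)

lemma orbit_num_Suc: "orbit_num p0 q0 (Suc k) x =
    (if even k then (x + 2) * orbit_num p0 q0 k x + orbit_den p0 q0 k x
     else - x * orbit_num p0 q0 k x)"
  and orbit_den_Suc: "orbit_den p0 q0 (Suc k) x =
    (if even k then x * orbit_den p0 q0 k x - orbit_num p0 q0 k x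
     else orbit_num p0 q0 k x - x * orbit_den p0 q0 k x)"
  by (simp_all add: orbit_num_def orbit_den_def split: prod.split)

lemma orbit_den_isCont:
  assumes "\<And>x. isCont p0 x" "\<And>x. isCont q0 x"
  shows "isCont (orbit_den p0 q0 k) x"
proof -
  have "isCont (orbit_num p0 q0 k) x \<and> isCont (orbit_den p0 q0 k) x"
  proof (induction k)
    case 0
    then show ?case
      using assms by (simp add: orbit_num_def orbit_den_def)
  next
    case (Suc k)
    have "orbit_num p0 q0 (Suc k) = (\<lambda>x. if even k
        then (x + 2) * orbit_num p0 q0 k x + orbit_den p0 q0 k x else - x * orbit_num p0 q0 k x)"
      and "orbit_den p0 q0 (Suc k) = (\<lambda>x. if even k
        then x * orbit_den p0 q0 k x - orbit_num p0 q0 k x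
        else orbit_num p0 q0 k x - x * orbit_den p0 q0 k x)"
      by (auto simp: orbit_num_Suc orbit_den_Suc)
    then show ?case
      using Suc by (cases "even k") (auto intro!: continuous_intros)
  qed
  then show ?thesis ..
qed

lemma cf_step_orbit:
  assumes "orbit_den p0 q0 k x \<noteq> 0" "orbit_den p0 q0 (Suc k) x \<noteq> 0"
  shows "cf_step x (even k) (orbit_num p0 q0 k x / orbit_den p0 q0 k x)
    = orbit_num p0 q0 (Suc k) x / orbit_den p0 q0 (Suc k) x"
  using assms unfolding orbit_den_Suc orbit_num_Suc
  by (cases "even k") (auto simp: cf_step_def field_simps power2_eq_square)

lemma orbit_ratio_eq_pole:
  assumes "orbit_den p0 q0 k x \<noteq> 0"
  shows "orbit_num p0 q0 k x / orbit_den p0 q0 k x = x \<longleftrightarrow> orbit_den p0 q0 (Suc k) x = 0"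
  using assms by (auto simp: orbit_den_Suc divide_eq_eq)

lemma cf_fold_orbit:
  assumes "\<forall>j\<le>m. orbit_den p0 q0 j x \<noteq> 0"
  shows "cf_avoids_pole x (p0 x / q0 x) (map even [0..<m])
    \<and> fold (cf_step x) (map even [0..<m]) (p0 x / q0 x) = orbit_num p0 q0 m x / orbit_den p0 q0 m x"
  using assms
proof (induction m)
  case 0
  then show ?case by simp
next
  case (Suc m)
  then have "orbit_num p0 q0 m x / orbit_den p0 q0 m x \<noteq> x"
    using orbit_ratio_eq_pole by auto
  then show ?case
    using Suc cf_step_orbit[of p0 q0 m x] by (simp add: cf_avoids_pole_snoc)
qed

lemma cf_fold_orbit_pole:
  assumes "\<forall>j\<le>m. orbit_den p0 q0 j x \<noteq> 0" and "orbit_den p0 q0 (Suc m) x = 0"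
  shows "cf_avoids_pole x (p0 x / q0 x) (map even [0..<m])
    \<and> fold (cf_step x) (map even [0..<m]) (p0 x / q0 x) = x"
  using cf_fold_orbit[of m p0 q0 x] orbit_ratio_eq_pole[of p0 q0 m x] assms by simp

lemma orbit_small_x_invariant:
  assumes x: "0 < x" "x \<le> 1/10" and q: "q0 x > 0" and p: "- x * q0 x \<le> p0 x" "p0 x \<le> 0"
  shows "orbit_den p0 q0 k x > 0 \<and>
    (even k \<longrightarrow> - 2 * x * orbit_den p0 q0 k x \<le> orbit_num p0 q0 k x \<and> orbit_num p0 q0 k x \<le> 0) \<and>
    (odd k \<longrightarrow> 2 * x * orbit_den p0 q0 k x \<le> orbit_num p0 q0 k x)"
proof (induction k)
  case 0
  have "- 2 * x * q0 x \<le> - x * q0 x"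
    using x q by (simp add: mult_left_mono)
  then show ?case
    using q p by simp
next
  case (Suc k)
  define N D where "N = orbit_num p0 q0 k x" and "D = orbit_den p0 q0 k x"
  show ?case
  proof (cases "even k")
    case True
    have IH: "D > 0" "- 2 * x * D \<le> N" "N \<le> 0"
      using Suc True unfolding N_def D_def by auto
    have "(3 * x + 2) * (- 2 * x * D) \<le> (3 * x + 2) * N"
      using IH x by (intro mult_left_mono) auto
    moreover have "x * x \<le> (1/10) * (1/10)"
      using x by (intro mult_mono) auto
    then have "0 \<le> (1 - 4 * x - 8 * x * x) * D"
      using x IH by simp
    ultimately have "2 * x * (x * D - N) \<le> (x + 2) * N + D"
      by (simp add: algebra_simps)
    moreover have "x * D > 0"
      using IH x by simp
    ultimately show ?thesis
      using IH True unfolding orbit_num_Suc orbit_den_Suc N_def D_def by simp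
  next
    case False
    have IH: "D > 0" "2 * x * D \<le> N"
      using Suc False unfolding N_def D_def by auto
    have "x * D > 0"
      using IH x by simp
    then have "x * D < N" "0 \<le> N"
      using IH by linarith+
    moreover from \<open>0 \<le> N\<close> have "0 \<le> x * N"
      using x by simp
    moreover have "x * (2 * x * D) \<le> x * N"
      using IH x by (intro mult_left_mono) auto
    ultimately show ?thesis
      using IH False unfolding orbit_num_Suc orbit_den_Suc N_def D_def
      by (simp add: algebra_simps)
  qed
qed

lemma orbit_den_odd_pos:
  assumes x: "x > 0" and q: "q0 x > 0" and p: "p0 x \<le> 0"
    and "odd k" and before: "\<forall>j<k. orbit_den p0 q0 j x > 0"
  shows "orbit_den p0 q0 k x > 0"
proof (cases "k = 1")
  case True
  have "x * q0 x > 0"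
    using x q by simp
  then show ?thesis
    using p True by (simp add: orbit_den_Suc[of p0 q0 0])
next
  case False
  define K where "K = k - 2"
  have K: "k = Suc (Suc K)" "odd K"
    using \<open>odd k\<close> False unfolding K_def by presburger+
  define N D where "N = orbit_num p0 q0 K x" and "D = orbit_den p0 q0 K x"
  have "D > 0" "N - x * D > 0"
    using before K orbit_den_Suc[of p0 q0 K x] unfolding N_def D_def by auto
  moreover have "orbit_den p0 q0 k x = 2 * x * (N - x * D) + x\<^sup>2 * D"
    using K unfolding N_def D_def K(1) orbit_den_Suc[of p0 q0 "Suc K" x]
    by (simp add: orbit_den_Suc[of p0 q0 K x] orbit_num_Suc[of p0 q0 K x] algebra_simps
        power2_eq_square)
  ultimately show ?thesis
    using x by (simp add: add_pos_pos)
qed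

lemma orbit_den_after_pole:
  assumes K: "odd K" and pole: "orbit_den p0 q0 (Suc K) x = 0"
  shows "orbit_den p0 q0 (K + 2) x = x\<^sup>2 * orbit_den p0 q0 K x"
    and "orbit_den p0 q0 (K + 3) x = - (2 * x + 2) * x\<^sup>2 * orbit_den p0 q0 K x"
    and "orbit_den p0 q0 (K + 4) x = - (3 * x + 4) * x ^ 3 * orbit_den p0 q0 K x"
proof -
  define D where "D = orbit_den p0 q0 K x"
  have parity: "even (Suc K)" "odd (Suc (Suc K))" "even (Suc (Suc (Suc K)))"
    using K by auto
  have "orbit_num p0 q0 K x = x * D"
    using pole K unfolding D_def orbit_den_Suc by simp
  then have num1: "orbit_num p0 q0 (Suc K) x = - x\<^sup>2 * D"
    using K by (simp add: orbit_num_Suc power2_eq_square)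
  have num2: "orbit_num p0 q0 (Suc (Suc K)) x = - (x + 2) * x\<^sup>2 * D"
    unfolding orbit_num_Suc[of p0 q0 "Suc K" x] using parity pole num1 by (simp add: algebra_simps)
  have den2: "orbit_den p0 q0 (Suc (Suc K)) x = x\<^sup>2 * D"
    unfolding orbit_den_Suc[of p0 q0 "Suc K" x] using parity pole num1 by simp
  have num3: "orbit_num p0 q0 (Suc (Suc (Suc K))) x = (x + 2) * x ^ 3 * D"
    unfolding orbit_num_Suc[of p0 q0 "Suc (Suc K)" x] num2 using parity
    by (simp add: algebra_simps power3_eq_cube power2_eq_square)
  have den3: "orbit_den p0 q0 (Suc (Suc (Suc K))) x = - (2 * x + 2) * x\<^sup>2 * D"
    unfolding orbit_den_Suc[of p0 q0 "Suc (Suc K)" x] num2 den2 using parity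
    by (simp add: algebra_simps power2_eq_square)
  have den4: "orbit_den p0 q0 (Suc (Suc (Suc (Suc K)))) x = - (3 * x + 4) * x ^ 3 * D"
    unfolding orbit_den_Suc[of p0 q0 "Suc (Suc (Suc K))" x] num3 den3 using parity
    by (simp add: algebra_simps power2_eq_square power3_eq_cube)
  from den2 den3 den4 show "orbit_den p0 q0 (K + 2) x = x\<^sup>2 * orbit_den p0 q0 K x"
    and "orbit_den p0 q0 (K + 3) x = - (2 * x + 2) * x\<^sup>2 * orbit_den p0 q0 K x"
    and "orbit_den p0 q0 (K + 4) x = - (3 * x + 4) * x ^ 3 * orbit_den p0 q0 K x"
    unfolding D_def by (simp_all add: numeral_eq_Suc)
qed

lemma orbit_den_first_zero:
  assumes x: "x > 0" and q: "q0 x > 0" and p: "p0 x \<le> 0"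
    and pole: "orbit_den p0 q0 k x = 0" and before: "\<forall>j<k. orbit_den p0 q0 j x > 0"
  shows "even k \<and> orbit_den p0 q0 (k + 1) x > 0
    \<and> orbit_den p0 q0 (k + 2) x < 0 \<and> orbit_den p0 q0 (k + 3) x < 0"
proof -
  have "k \<noteq> 0"
  proof
    assume "k = 0"
    with pole q show False
      by simp
  qed
  moreover have "even k"
    using orbit_den_odd_pos[OF x q p _ before] pole by auto
  ultimately obtain K where K: "k = Suc K" "odd K"
    by (metis dvd_0_left even_Suc not0_implies_Suc)
  have "orbit_den p0 q0 K x > 0"
    using before K by simp
  then have "x\<^sup>2 * orbit_den p0 q0 K x > 0" "(2 * x + 2) * x\<^sup>2 * orbit_den p0 q0 K x > 0"
    "(3 * x + 4) * x ^ 3 * orbit_den p0 q0 K x > 0"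
    using x by simp_all
  moreover have "k + 1 = K + 2" "k + 2 = K + 3" "k + 3 = K + 4"
    using K by simp_all
  ultimately show ?thesis
    using \<open>even k\<close> orbit_den_after_pole[OF K(2) pole[unfolded K(1)]]
    by (simp only: mult_minus_left neg_less_0_iff_less)
qed

lemma alternating_reference_orbit:
  assumes x: "x > 0" and pos: "\<forall>k\<le>2 * J. orbit_den p0 q0 k x > 0"
  shows "alternating_reference x (\<lambda>k. orbit_num p0 q0 k x / orbit_den p0 q0 k x) J"
  unfolding alternating_reference_def
proof (intro conjI allI impI)
  fix k
  assume "k < 2 * J"
  then have "orbit_den p0 q0 k x \<noteq> 0" "orbit_den p0 q0 (Suc k) x \<noteq> 0"
    using pos by (simp_all add: less_imp_neq[symmetric])
  then show "orbit_num p0 q0 (Suc k) x / orbit_den p0 q0 (Suc k) x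
      = cf_step x (even k) (orbit_num p0 q0 k x / orbit_den p0 q0 k x)"
    using cf_step_orbit by simp
next
  fix i
  assume "i < J"
  define N D where "N = orbit_num p0 q0 (2 * i + 1) x" and "D = orbit_den p0 q0 (2 * i + 1) x"
  have "D > 0" "orbit_den p0 q0 (Suc (2 * i + 1)) x > 0"
    using pos \<open>i < J\<close> unfolding D_def by simp_all
  then have "D > 0" "N - x * D > 0"
    using orbit_den_Suc[of p0 q0 "2 * i + 1" x] unfolding N_def D_def by simp_all
  then have "x < N / D"
    by (simp add: field_simps)
  then show "x < orbit_num p0 q0 (2 * i + 1) x / orbit_den p0 q0 (2 * i + 1) x"
    unfolding N_def D_def .
qed

section \<open>Positivity by continuity\<close>

lemma continuous_on_Min_family:
  fixes g :: "'i \<Rightarrow> 'a::topological_space \<Rightarrow> 'b::linorder_topology"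
  assumes "finite I" "I \<noteq> {}" "\<And>i. i \<in> I \<Longrightarrow> continuous_on S (g i)"
  shows "continuous_on S (\<lambda>x. Min ((\<lambda>i. g i x) ` I))"
  using assms
proof (induction I rule: finite_ne_induct)
  case (singleton i)
  then show ?case by simp
next
  case (insert i I)
  have "continuous_on S (\<lambda>x. min (g i x) (Min ((\<lambda>i. g i x) ` I)))"
    using insert by (auto intro!: continuous_on_min)
  then show ?case
    using insert.hyps by simp
qed

lemma finite_family_stays_positive:
  fixes g :: "'i \<Rightarrow> real \<Rightarrow> real"
  assumes "finite I" "a \<le> b" "\<And>i. i \<in> I \<Longrightarrow> continuous_on {a..b} (g i)"
    and "\<forall>i\<in>I. g i a > 0"
    and no_touch: "\<And>x. a \<le> x \<Longrightarrow> x \<le> b \<Longrightarrow> \<forall>i\<in>I. g i x \<ge> 0 \<Longrightarrow> \<forall>i\<in>I. g i x \<noteq> 0"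
  shows "\<forall>i\<in>I. g i b > 0"
proof (rule ccontr)
  assume "\<not> (\<forall>i\<in>I. g i b > 0)"
  then obtain i where i: "i \<in> I" "g i b \<le> 0"
    by auto
  define h where "h x = Min ((\<lambda>i. g i x) ` I)" for x
  have "I \<noteq> {}"
    using i by auto
  have "h b \<le> 0"
    unfolding h_def using i assms(1) by (meson Min_le finite_imageI image_eqI order_trans)
  moreover have "0 \<le> h a"
    unfolding h_def using assms(1,4) \<open>I \<noteq> {}\<close> by (simp add: less_imp_le)
  moreover have "continuous_on {a..b} h"
    unfolding h_def[abs_def] using assms(1) \<open>I \<noteq> {}\<close> assms(3) by (rule continuous_on_Min_family)
  ultimately obtain x where x: "a \<le> x" "x \<le> b" "h x = 0"
    using IVT2'[of h b 0 a] assms(2) by auto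
  have "\<forall>i\<in>I. g i x \<ge> 0"
    using x(3) assms(1) unfolding h_def by (metis Min_le finite_imageI image_eqI)
  moreover have "\<exists>i\<in>I. g i x = 0"
    using x(3) Min_in[of "(\<lambda>i. g i x) ` I"] assms(1) \<open>I \<noteq> {}\<close> unfolding h_def by auto
  ultimately show False
    using no_touch[OF x(1,2)] by blast
qed

lemma orbit_den_pos_up_to:
  assumes I: "finite I" and X: "X > 0"
    and cont: "\<And>x. isCont p0 x" "\<And>x. isCont q0 x"
    and start: "\<And>x. 0 < x \<Longrightarrow> q0 x > 0 \<and> - x * q0 x \<le> p0 x \<and> p0 x \<le> 0"
    and no_first_zero: "\<And>x k. 0 < x \<Longrightarrow> x \<le> X \<Longrightarrow> k \<in> I \<Longrightarrow> orbit_den p0 q0 k x = 0 \<Longrightarrow>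
      \<forall>j\<in>I. orbit_den p0 q0 j x \<ge> 0 \<Longrightarrow> \<forall>j\<in>I. j < k \<longrightarrow> orbit_den p0 q0 j x > 0 \<Longrightarrow> False"
  shows "\<forall>k\<in>I. orbit_den p0 q0 k X > 0"
proof (rule finite_family_stays_positive[OF I])
  define a where "a = min (1/10) X"
  show "a \<le> X" "\<forall>k\<in>I. orbit_den p0 q0 k a > 0"
    using orbit_small_x_invariant[of a q0 p0] start[of a] X unfolding a_def by auto
  show "continuous_on {a..X} (orbit_den p0 q0 k)" for k
    using orbit_den_isCont[OF cont] by (simp add: continuous_at_imp_continuous_on)
  fix x
  assume x: "a \<le> x" "x \<le> X" and nonneg: "\<forall>k\<in>I. orbit_den p0 q0 k x \<ge> 0"
  have "0 < x"
    using x X unfolding a_def by linarith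
  show "\<forall>k\<in>I. orbit_den p0 q0 k x \<noteq> 0"
  proof (rule ccontr)
    assume "\<not> ?thesis"
    then obtain k where k: "k \<in> I" "orbit_den p0 q0 k x = 0"
      and least: "\<forall>j<k. \<not> (j \<in> I \<and> orbit_den p0 q0 j x = 0)"
      using exists_least_iff[of "\<lambda>k. k \<in> I \<and> orbit_den p0 q0 k x = 0"] by blast
    have "\<forall>j\<in>I. j < k \<longrightarrow> orbit_den p0 q0 j x > 0"
      using least nonneg by force
    then show False
      using no_first_zero[OF \<open>0 < x\<close> x(2) k nonneg] by blast
  qed
qed

section \<open>Comparison with the antiregular graph\<close>

lemma no_shifted_eigenvalue_by_comparison:
  assumes x: "x > 0" and pos: "\<forall>k\<le>2 * J. orbit_den p0 q0 k x > 0"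
    and start: "dominated x (\<lambda>k. orbit_num p0 q0 k x / orbit_den p0 q0 k x) 0 p c"
    and rises: "rises (p # rev (tl b)) \<le> J" and "b \<noteq> []"
  shows "\<not> shifted_eigenvalue b c x"
proof -
  have "cf_avoids_pole x c (rev (tl b)) \<and> fold (cf_step x) (rev (tl b)) c \<noteq> x"
    using dominated_run_avoids_pole[OF x alternating_reference_orbit[OF x pos] start] rises
    by simp
  then show ?thesis
    using shifted_eigenvalue_iff_cf_fold[OF \<open>b \<noteq> []\<close>] by blast
qed

lemma graph_eigenvalue_antiregular_of_pole:
  assumes n: "even n" "n > 0"
    and nonzero: "\<forall>j<n. orbit_den (\<lambda>_. 0) (\<lambda>_. 1) j x \<noteq> 0"
    and pole: "orbit_den (\<lambda>_. 0) (\<lambda>_. 1) n x = 0"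
  shows "graph_eigenvalue (antiregular_string n) x"
proof -
  have "cf_avoids_pole x 0 (map even [0..<n - 1]) \<and> fold (cf_step x) (map even [0..<n - 1]) 0 = x"
    using cf_fold_orbit_pole[of "n - 1" "\<lambda>_. 0" "\<lambda>_. 1" x] nonzero pole n(2) by simp
  moreover have "antiregular_string n \<noteq> []"
    using length_antiregular_string[OF n(1)] n(2) by auto
  ultimately show ?thesis
    using shifted_eigenvalue_iff_cf_fold rev_tl_antiregular_string[OF n(1)]
    by (simp add: graph_eigenvalue_iff_shifted)
qed

lemma graph_eigenvalue_antiregular_of_pole_complement:
  assumes n: "even n" "n \<ge> 2" and x: "x > 0"
    and below: "\<forall>j<n - 2. orbit_den uminus (\<lambda>x. 1 + x) j x > 0"
    and pole: "orbit_den uminus (\<lambda>x. 1 + x) (n - 1) x = 0"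
  shows "graph_eigenvalue (antiregular_string n) (-1 - x)"
proof -
  let ?g = "orbit_den uminus (\<lambda>x. 1 + x)"
  have "?g (n - 2) x \<noteq> 0"
  proof
    assume "?g (n - 2) x = 0"
    then have "?g (n - 2 + 1) x > 0"
      using orbit_den_first_zero[OF x _ _ _ below] x by simp
    with pole n(2) show False
      by (simp add: Suc_diff_Suc numeral_2_eq_2)
  qed
  with below have "\<forall>j\<le>n - 2. ?g j x \<noteq> 0"
    by (metis le_neq_implies_less less_irrefl)
  then have "cf_avoids_pole x (- x / (1 + x)) (map even [0..<n - 2])
      \<and> fold (cf_step x) (map even [0..<n - 2]) (- x / (1 + x)) = x"
    using cf_fold_orbit_pole[of "n - 2" uminus "\<lambda>x. 1 + x" x] pole n(2)
    by (simp add: Suc_diff_Suc numeral_2_eq_2)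
  moreover have "map Not (antiregular_string n) \<noteq> []"
    using length_antiregular_string[OF n(1)] n(2) by auto
  ultimately have "shifted_eigenvalue (map Not (antiregular_string n)) (-1) x"
    using shifted_eigenvalue_iff_cf_fold rev_tl_complement_antiregular_string[OF n]
      cf_step_False_minus_one[of x] x by simp
  then show ?thesis
    by (simp add: graph_eigenvalue_iff_shifted shifted_eigenvalue_complement)
qed

lemma antiregular_orbit_den_pos_plus:
  assumes n: "even n" and X: "X > 0"
    and no_eig: "\<And>z. graph_eigenvalue (antiregular_string n) z \<Longrightarrow> 0 < z \<Longrightarrow> X < z"
  shows "\<forall>k\<le>n. orbit_den (\<lambda>_. 0) (\<lambda>_. 1) k X > 0"
proof -
  have "\<forall>k\<in>{..n}. orbit_den (\<lambda>_. 0) (\<lambda>_. 1) k X > 0"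
  proof (rule orbit_den_pos_up_to)
    fix x k
    assume x: "0 < x" "x \<le> X" and k: "k \<in> {..n}" and pole: "orbit_den (\<lambda>_. 0) (\<lambda>_. 1) k x = 0"
      and nonneg: "\<forall>j\<in>{..n}. orbit_den (\<lambda>_. 0) (\<lambda>_. 1) j x \<ge> 0"
      and before: "\<forall>j\<in>{..n}. j < k \<longrightarrow> orbit_den (\<lambda>_. 0) (\<lambda>_. 1) j x > 0"
    have before': "\<forall>j<k. orbit_den (\<lambda>_. 0) (\<lambda>_. 1) j x > 0"
      using before k by auto
    have "k \<noteq> 0"
      using pole by (rule contrapos_pn) simp
    have "even k" "orbit_den (\<lambda>_. 0) (\<lambda>_. 1) (k + 2) x < 0"
      using orbit_den_first_zero[OF x(1) _ _ pole before'] by simp_all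
    then have "\<not> k + 2 \<le> n"
      using nonneg by force
    then have "k = n"
      using k n \<open>even k\<close> by auto presburger
    then have "graph_eigenvalue (antiregular_string n) x"
      using graph_eigenvalue_antiregular_of_pole[OF n] before' pole \<open>k \<noteq> 0\<close> by force
    then show False
      using no_eig x by force
  qed (use X in auto)
  then show ?thesis
    by auto
qed

lemma antiregular_orbit_den_pos_minus:
  assumes n: "even n" "n \<ge> 4" and X: "X > 0"
    and no_eig: "\<And>z. graph_eigenvalue (antiregular_string n) z \<Longrightarrow> z < -1 \<Longrightarrow> z < -1 - X"
  shows "\<forall>k\<le>n - 3. orbit_den uminus (\<lambda>x. 1 + x) k X > 0"
proof -
  let ?g = "orbit_den uminus (\<lambda>x. 1 + x)" and ?I = "{..n - 3} \<union> {n - 1}"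
  have "\<forall>k\<in>?I. ?g k X > 0"
  proof (rule orbit_den_pos_up_to)
    fix x k
    assume x: "0 < x" "x \<le> X" and k: "k \<in> ?I" and pole: "?g k x = 0"
      and nonneg: "\<forall>j\<in>?I. ?g j x \<ge> 0" and before: "\<forall>j\<in>?I. j < k \<longrightarrow> ?g j x > 0"
    show False
    proof (cases "k \<le> n - 3")
      case True
      then have "\<forall>j<k. ?g j x > 0"
        using before by auto
      then have "even k" "?g (k + 2) x < 0" "?g (k + 3) x < 0"
        using orbit_den_first_zero[OF x(1) _ _ pole] x by auto
      moreover have "k + 2 \<in> ?I \<or> k + 3 \<in> ?I"
        using True \<open>even k\<close> n by auto
      ultimately show False
        using nonneg by force
    next
      case False
      then have "k = n - 1"
        using k by auto
      then have "\<forall>j<n - 2. ?g j x > 0"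
        using before n(2) by auto
      then have "graph_eigenvalue (antiregular_string n) (-1 - x)"
        using graph_eigenvalue_antiregular_of_pole_complement[OF n(1) _ x(1)] pole
          \<open>k = n - 1\<close> n(2) by simp
      then show False
        using no_eig x by force
    qed
  qed (use X in \<open>auto simp: algebra_simps\<close>)
  then show ?thesis
    by auto
qed

lemma antiregular_eigenvalue_between_zero_and:
  assumes n: "even n" and len: "length b = n" and y: "y > 0" "graph_eigenvalue b y"
  shows "\<exists>z. graph_eigenvalue (antiregular_string n) z \<and> 0 < z \<and> z \<le> y"
proof (rule ccontr)
  assume "\<not> ?thesis"
  then have "\<forall>k\<le>2 * (n div 2). orbit_den (\<lambda>_. 0) (\<lambda>_. 1) k y > 0"
    using antiregular_orbit_den_pos_plus[OF n y(1)] n by force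
  moreover have "dominated y (\<lambda>k. orbit_num (\<lambda>_. 0) (\<lambda>_. 1) k y / orbit_den (\<lambda>_. 0) (\<lambda>_. 1) k y) 0 False 0"
    by (simp add: dominated_def)
  moreover have "b \<noteq> []"
    using y(2) by (auto simp: graph_eigenvalue_iff_shifted shifted_eigenvalue_def)
  moreover from this have "rises (False # rev (tl b)) \<le> n div 2"
    using rises_le_half_length[of "False # rev (tl b)"] len by simp
  ultimately have "\<not> shifted_eigenvalue b 0 y"
    using no_shifted_eigenvalue_by_comparison[OF y(1)] by blast
  with y(2) show False
    by (simp add: graph_eigenvalue_iff_shifted)
qed

lemma antiregular_eigenvalue_between_and_minus_one:
  assumes n: "even n" and bf: "block_form b k s t" and len: "length b = n"
    and first: "s 0 = 1 \<or> (2 \<le> s 0 \<and> 2 * k + 2 < n)"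
    and y: "y < -1" "graph_eigenvalue b y"
  shows "\<exists>z. graph_eigenvalue (antiregular_string n) z \<and> y \<le> z \<and> z < -1"
proof (cases "b = antiregular_string n")
  case True
  then show ?thesis
    using y by auto
next
  case False
  define X where "X = -1 - y"
  have X: "X > 0"
    using y(1) unfolding X_def by simp
  have bound: "2 * rises (tl b) + 4 \<le> n"
    using block_form_rises_tl_bound[OF bf len n False first] .
  show ?thesis
  proof (rule ccontr)
    assume "\<not> ?thesis"
    then have "z < -1 - X" if "graph_eigenvalue (antiregular_string n) z" "z < -1" for z
      using that unfolding X_def by fastforce
    then have "\<forall>k\<le>2 * rises (tl b). orbit_den uminus (\<lambda>x. 1 + x) k X > 0"
      using antiregular_orbit_den_pos_minus[OF n _ X] bound by simp
    moreover have "dominated X (\<lambda>k. orbit_num uminus (\<lambda>x. 1 + x) k X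
        / orbit_den uminus (\<lambda>x. 1 + x) k X) 0 True (-1)"
      using X cf_step_False_minus_one[of X] by (simp add: dominated_def)
    moreover have "rises (True # rev (tl (map Not b))) \<le> rises (tl b)"
      by (simp add: rises_rev_map_Not flip: map_tl)
    moreover have "map Not b \<noteq> []"
      using bound len by auto
    ultimately have "\<not> shifted_eigenvalue (map Not b) (-1) X"
      by (rule no_shifted_eigenvalue_by_comparison[OF X])
    with y(2) show False
      by (simp add: graph_eigenvalue_iff_shifted shifted_eigenvalue_complement X_def)
  qed
qed

lemma finite_graph_eigenvalues_restrict: "finite {x. graph_eigenvalue b x \<and> P x}"
  using finite_graph_eigenvalues[of b] by (rule rev_finite_subset) auto

lemma mu_plus_antiregular_le:
  assumes "even n" "length b = n" and nonempty: "{x. graph_eigenvalue b x \<and> x > 0} \<noteq> {}"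
  shows "mu_plus (antiregular_string n) \<le> mu_plus b"
proof -
  have "mu_plus b \<in> {x. graph_eigenvalue b x \<and> x > 0}"
    unfolding mu_plus_def using finite_graph_eigenvalues_restrict nonempty by (rule Min_in)
  then obtain z where z: "graph_eigenvalue (antiregular_string n) z" "0 < z" "z \<le> mu_plus b"
    using antiregular_eigenvalue_between_zero_and[OF assms(1,2)] by blast
  have "mu_plus (antiregular_string n) \<le> z"
    unfolding mu_plus_def using finite_graph_eigenvalues_restrict z(1,2) by (intro Min_le) auto
  with z(3) show ?thesis
    by simp
qed

lemma mu_minus_le_antiregular:
  assumes "even n" "block_form b k s t" "length b = n" "s 0 = 1 \<or> (2 \<le> s 0 \<and> 2 * k + 2 < n)"
    and nonempty: "{x. graph_eigenvalue b x \<and> x < -1} \<noteq> {}"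
  shows "mu_minus b \<le> mu_minus (antiregular_string n)"
proof -
  have "mu_minus b \<in> {x. graph_eigenvalue b x \<and> x < -1}"
    unfolding mu_minus_def using finite_graph_eigenvalues_restrict nonempty by (rule Max_in)
  then obtain z where z: "graph_eigenvalue (antiregular_string n) z" "mu_minus b \<le> z" "z < -1"
    using antiregular_eigenvalue_between_and_minus_one[OF assms(1-4)] by blast
  have "z \<le> mu_minus (antiregular_string n)"
    unfolding mu_minus_def using finite_graph_eigenvalues_restrict z(1,3) by (intro Max_ge) auto
  with z(2) show ?thesis
    by simp
qed

theorem theorem4p2:
  fixes n :: nat
  assumes "n \<ge> 2" and "even n"
  shows
    "(\<forall>b. is_threshold_string b \<and> length b = n
          \<and> {x. graph_eigenvalue b x \<and> x > 0} \<noteq> {}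
        \<longrightarrow> mu_plus (antiregular_string n) \<le> mu_plus b)
     \<and> (\<forall>b k s t. block_form b k s t \<and> length b = n \<and> s 0 = 1
          \<and> {x. graph_eigenvalue b x \<and> x < -1} \<noteq> {}
        \<longrightarrow> mu_minus b \<le> mu_minus (antiregular_string n))
     \<and> (\<forall>b k s t. block_form b k s t \<and> length b = n \<and> s 0 \<ge> 2 \<and> 2 * k + 2 < n
          \<and> {x. graph_eigenvalue b x \<and> x < -1} \<noteq> {}
        \<longrightarrow> mu_minus b \<le> mu_minus (antiregular_string n))"
  using mu_plus_antiregular_le[OF assms(2)] mu_minus_le_antiregular[OF assms(2)] by blast

end
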